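(* Let $d\ge 3$, $\lambda>0$ with $\log d\lesssim\lambda\lesssim d$, $\rho_0=\log^{-c_0}d$ for a constant $c_0>0$, $\mu=\rho_0/(d+\lambda)$, and let $(a,b,c)$ solve \[ \dot a=a(24-16a-8r),\quad \dot b=8(1+\lambda)(1-r)b-16(1+\lambda)^2b^2,\quad \dot c=8(1-r)c-16c^2, \] with $r=a+(1+\lambda)b+(d-2)c$ and $a(0)=b(0)=c(0)=\mu$. Fix $\rho\in(0,1/12)$, $\varepsilon\in(0,1/4]$ and define $T_{1a}=\inf\{t\ge0:r(t)\ge\rho\}$, $T_1=\inf\{t\ge T_{1a}:\dot b(t)\le0\}$, $T_{2a}=\inf\{t\ge T_1:r(t)\ge1-\varepsilon\}$, $T_2=\inf\{t\ge T_{2a}:a(t)\ge\rho\}$. Then, for $d$ large enough: (1) $T_2-T_{2a}=\Theta\big(\log(1/a(T_{2a}))\big)=\Theta(\log d)$; (2) $\mathrm{Align}(T_2)=1-O(\lambda^{-2})-o(1)$.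
   Context: This ODE is the population gradient flow of the phase-retrieval model $y=(x^\top w_\star)^2+\nu$, $x\sim\mathcal N(0,I_d+\lambda vv^\top)$ ($v\perp w_\star$ unit vectors), with network $f_W(x)=\sum_{j=1}^d(w_j^\top x)^2$, in the coordinates $WW^\top=a\,w_\star w_\star^\top+b\,vv^\top+c(I-w_\star w_\star^\top-vv^\top)$, started from $WW^\top=\mu I_d$. The alignment is $\mathrm{Align}(t)=a(t)/\sqrt{a(t)^2+b(t)^2+(d-2)c(t)^2}$. Asymptotic notation refers to $d\to\infty$ with $\varepsilon,\rho$ fixed. *)

theory Defs
  imports "HOL-Analysis.Analysis" "HOL-Library.Landau_Symbols"
begin

definition rr :: "real \<Rightarrow> nat \<Rightarrow> real \<Rightarrow> real \<Rightarrow> real \<Rightarrow> real" where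
  "rr lam d a b c = a + (1 + lam) * b + (real d - 2) * c"

definition adot :: "real \<Rightarrow> nat \<Rightarrow> real \<Rightarrow> real \<Rightarrow> real \<Rightarrow> real" where
  "adot lam d a b c = a * (24 - 16 * a - 8 * rr lam d a b c)"

definition bdot :: "real \<Rightarrow> nat \<Rightarrow> real \<Rightarrow> real \<Rightarrow> real \<Rightarrow> real" where
  "bdot lam d a b c = 8 * (1 + lam) * (1 - rr lam d a b c) * b - 16 * (1 + lam)^2 * b^2"

definition cdot :: "real \<Rightarrow> nat \<Rightarrow> real \<Rightarrow> real \<Rightarrow> real \<Rightarrow> real" where
  "cdot lam d a b c = 8 * (1 - rr lam d a b c) * c - 16 * c^2"

definition is_sol :: "real \<Rightarrow> nat \<Rightarrow> real \<Rightarrow> (real \<Rightarrow> real) \<Rightarrow> (real \<Rightarrow> real) \<Rightarrow> (real \<Rightarrow> real) \<Rightarrow> bool" where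
  "is_sol lam d mu a b c \<longleftrightarrow>
     a 0 = mu \<and> b 0 = mu \<and> c 0 = mu \<and>
     (\<forall>t\<ge>0.
        (a has_real_derivative adot lam d (a t) (b t) (c t)) (at t within {0..}) \<and>
        (b has_real_derivative bdot lam d (a t) (b t) (c t)) (at t within {0..}) \<and>
        (c has_real_derivative cdot lam d (a t) (b t) (c t)) (at t within {0..}))"

definition align :: "nat \<Rightarrow> real \<Rightarrow> real \<Rightarrow> real \<Rightarrow> real" where
  "align d a b c = a / sqrt (a^2 + b^2 + (real d - 2) * c^2)"

definition T1a :: "real \<Rightarrow> nat \<Rightarrow> real \<Rightarrow> (real \<Rightarrow> real) \<Rightarrow> (real \<Rightarrow> real) \<Rightarrow> (real \<Rightarrow> real) \<Rightarrow> real" where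
  "T1a lam d \<rho> a b c = Inf {t. t \<ge> 0 \<and> rr lam d (a t) (b t) (c t) \<ge> \<rho>}"

definition T1 :: "real \<Rightarrow> nat \<Rightarrow> real \<Rightarrow> (real \<Rightarrow> real) \<Rightarrow> (real \<Rightarrow> real) \<Rightarrow> (real \<Rightarrow> real) \<Rightarrow> real" where
  "T1 lam d \<rho> a b c = Inf {t. t \<ge> T1a lam d \<rho> a b c \<and> bdot lam d (a t) (b t) (c t) \<le> 0}"

definition T2a :: "real \<Rightarrow> nat \<Rightarrow> real \<Rightarrow> real \<Rightarrow> (real \<Rightarrow> real) \<Rightarrow> (real \<Rightarrow> real) \<Rightarrow> (real \<Rightarrow> real) \<Rightarrow> real" where
  "T2a lam d \<rho> \<epsilon> a b c = Inf {t. t \<ge> T1 lam d \<rho> a b c \<and> rr lam d (a t) (b t) (c t) \<ge> 1 - \<epsilon>}"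

definition T2 :: "real \<Rightarrow> nat \<Rightarrow> real \<Rightarrow> real \<Rightarrow> (real \<Rightarrow> real) \<Rightarrow> (real \<Rightarrow> real) \<Rightarrow> (real \<Rightarrow> real) \<Rightarrow> real" where
  "T2 lam d \<rho> \<epsilon> a b c = Inf {t. t \<ge> T2a lam d \<rho> \<epsilon> a b c \<and> a t \<ge> \<rho>}"

end

theory Submission
  imports Defs "HOL-Real_Asymp.Real_Asymp"
begin

(* All three coordinates stay positive and below the barriers a < 1, (1 + lambda) b < 1/3,
   (d - 2) c < 1, and each grows or decays at most exponentially with bounded rate.
   Since lambda >= kappa log d, the b-direction grows at rate 4 lambda and reaches
   (1 + lambda) b >= 1/8 within time 1/kappa; while b keeps growing, c then grows at rate 1,
   and after b has stopped, c grows at rate 4 epsilon as long as r < 1 - epsilon. As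
   (d - 2) c cannot exceed 1, both phases end within time O(log log d), so T2a = O(log log d)
   and log (1 / a(T2a)) = log d + O(log log d). From T2a on, a grows at a rate between 11 and
   24 until it reaches rho, which gives T2 - T2a = Theta(log (1 / a(T2a))). At T2 we have
   a >= rho while b^2 + (d - 2) c^2 <= 1 / (9 (1 + lambda)^2) + 1 / (d - 2), which bounds the
   misalignment. *)

definition has_deriv_on_nonneg :: "(real \<Rightarrow> real) \<Rightarrow> (real \<Rightarrow> real) \<Rightarrow> bool" where
  "has_deriv_on_nonneg f f' \<longleftrightarrow> (\<forall>t\<ge>0. (f has_real_derivative f' t) (at t within {0..}))"

lemma has_deriv_on_nonneg_continuous_on:
  "has_deriv_on_nonneg f f' \<Longrightarrow> continuous_on {0..} f"
  unfolding has_deriv_on_nonneg_def continuous_on_eq_continuous_within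
  using DERIV_continuous by blast

lemma has_deriv_on_nonneg_at:
  assumes "has_deriv_on_nonneg f f'" "0 < t"
  shows "(f has_real_derivative f' t) (at t)"
proof -
  have "(f has_real_derivative f' t) (at t within {0<..})"
    using assms unfolding has_deriv_on_nonneg_def
    by (meson DERIV_subset greaterThan_iff atLeast_iff less_imp_le subsetI)
  then show ?thesis
    using at_within_open[of t "{0<..}"] assms(2) by auto
qed

lemma deriv_nonneg_imp_le:
  assumes D: "has_deriv_on_nonneg f f'" and st: "0 \<le> s" "s \<le> t"
    and nonneg: "\<And>u. s < u \<Longrightarrow> u < t \<Longrightarrow> 0 \<le> f' u"
  shows "f s \<le> f t"
proof (rule DERIV_nonneg_imp_increasing_open[OF st(2)])
  show "\<And>x. s < x \<Longrightarrow> x < t \<Longrightarrow> \<exists>y. (f has_real_derivative y) (at x) \<and> 0 \<le> y"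
    using has_deriv_on_nonneg_at[OF D] nonneg st by (meson le_less_trans)
  show "continuous_on {s..t} f"
    using has_deriv_on_nonneg_continuous_on[OF D] by (rule continuous_on_subset) (use st in auto)
qed

lemma gronwall_lower:
  assumes D: "has_deriv_on_nonneg f f'" and st: "0 \<le> s" "s \<le> t"
    and rate: "\<And>u. s \<le> u \<Longrightarrow> u \<le> t \<Longrightarrow> k * f u \<le> f' u"
  shows "f s * exp (k * (t - s)) \<le> f t"
proof -
  define h where "h u = f u * exp (- k * u)" for u
  have "has_deriv_on_nonneg h (\<lambda>u. f' u * exp (- k * u) + f u * (exp (- k * u) * (- k)))"
    using D unfolding h_def has_deriv_on_nonneg_def by (auto intro!: derivative_eq_intros)
  then have "h s \<le> h t"
  proof (rule deriv_nonneg_imp_le[OF _ st])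
    fix u assume "s < u" "u < t"
    then have "0 \<le> (f' u - k * f u) * exp (- k * u)"
      using rate by simp
    then show "0 \<le> f' u * exp (- k * u) + f u * (exp (- k * u) * (- k))"
      by (simp add: algebra_simps)
  qed
  then have "f s * exp (- k * s) * exp (k * t) \<le> f t * exp (- k * t) * exp (k * t)"
    unfolding h_def by (simp add: mult_right_mono)
  also have "\<dots> = f t"
    by (simp add: mult.assoc flip: exp_add)
  finally show ?thesis
    by (simp add: mult.assoc right_diff_distrib flip: exp_add)
qed

lemma gronwall_upper:
  assumes D: "has_deriv_on_nonneg f f'" and st: "0 \<le> s" "s \<le> t"
    and rate: "\<And>u. s \<le> u \<Longrightarrow> u \<le> t \<Longrightarrow> f' u \<le> k * f u"
  shows "f t \<le> f s * exp (k * (t - s))"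
proof -
  have "has_deriv_on_nonneg (\<lambda>u. - f u) (\<lambda>u. - f' u)"
    using D unfolding has_deriv_on_nonneg_def by (auto intro!: derivative_eq_intros)
  then have "- f s * exp (k * (t - s)) \<le> - f t"
    by (rule gronwall_lower[OF _ st]) (use rate in force)
  then show ?thesis by simp
qed

lemma first_crossing:
  fixes f :: "real \<Rightarrow> real"
  assumes C: "continuous_on {0..} f" and f0: "f 0 < M" and t1: "0 \<le> t1" "M \<le> f t1"
  obtains t0 where "0 < t0" "f t0 = M" "\<And>s. 0 \<le> s \<Longrightarrow> s < t0 \<Longrightarrow> f s < M"
proof -
  define S where "S = {0..t1} \<inter> f -` {M..}"
  have "continuous_on {0..t1} f"
    using C by (rule continuous_on_subset) auto
  then have "closed S"
    unfolding S_def by (rule continuous_closed_preimage) auto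
  moreover have "S \<noteq> {}" "bdd_below S"
    using t1 unfolding S_def by (auto intro: bdd_belowI[of _ 0])
  ultimately have t0S: "Inf S \<in> S"
    using closed_contains_Inf by blast
  have below: "f s < M" if "0 \<le> s" "s < Inf S" for s
  proof (rule ccontr)
    assume "\<not> f s < M"
    then have "s \<in> S"
      using that t0S unfolding S_def by auto
    then have "Inf S \<le> s"
      using \<open>bdd_below S\<close> by (rule cInf_lower)
    with that show False by simp
  qed
  have t0: "0 \<le> Inf S" "M \<le> f (Inf S)"
    using t0S unfolding S_def by auto
  with f0 have pos: "0 < Inf S"
    by (cases "Inf S = 0") auto
  have "continuous_on {0..Inf S} f"
    using C by (rule continuous_on_subset) auto
  then obtain x where x: "0 \<le> x" "x \<le> Inf S" "f x = M"
    using IVT'[of f 0 M "Inf S"] f0 t0 by auto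
  then have "x = Inf S"
    using below[of x] by force
  then show ?thesis
    using that pos x below by blast
qed

lemma stays_below:
  assumes D: "has_deriv_on_nonneg f f'" and f0: "f 0 < M"
    and barrier: "\<And>t. 0 < t \<Longrightarrow> f t = M \<Longrightarrow> f' t < 0" and t: "0 \<le> t"
  shows "f t < M"
proof (rule ccontr)
  assume "\<not> f t < M"
  then obtain t0 where t0: "0 < t0" "f t0 = M" "\<And>s. 0 \<le> s \<Longrightarrow> s < t0 \<Longrightarrow> f s < M"
    using first_crossing[OF has_deriv_on_nonneg_continuous_on[OF D] f0 t] by auto
  obtain e where e: "0 < e" "\<And>h. 0 < h \<Longrightarrow> h < e \<Longrightarrow> f t0 < f (t0 - h)"
    using DERIV_neg_dec_left[OF has_deriv_on_nonneg_at[OF D t0(1)] barrier[OF t0(1,2)]] by blast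
  define h where "h = min (e / 2) (t0 / 2)"
  have "f t0 < f (t0 - h)" "f (t0 - h) < M"
    using e t0 by (auto simp: h_def)
  then show False
    using t0 by simp
qed

lemma stays_positive:
  assumes D: "has_deriv_on_nonneg f f'" and eq: "\<And>t. 0 \<le> t \<Longrightarrow> f' t = f t * \<phi> t"
    and C: "continuous_on {0..} \<phi>" and f0: "0 < f 0" and t: "0 \<le> t"
  shows "0 < f t"
proof (rule ccontr)
  assume "\<not> 0 < f t"
  have "continuous_on {0..} (\<lambda>u. - f u)"
    using has_deriv_on_nonneg_continuous_on[OF D] by (intro continuous_intros)
  then obtain t0 where t0: "0 < t0" "- f t0 = 0" "\<And>s. 0 \<le> s \<Longrightarrow> s < t0 \<Longrightarrow> - f s < 0"
    by (rule first_crossing[OF _ _ t, of _ 0]) (use f0 \<open>\<not> 0 < f t\<close> in auto)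
  have "compact (\<phi> ` {0..t0})"
    by (rule compact_continuous_image[OF continuous_on_subset[OF C]]) auto
  then have "bounded (\<phi> ` {0..t0})"
    by (rule compact_imp_bounded)
  then obtain B where B: "\<forall>y\<in>\<phi> ` {0..t0}. \<bar>y\<bar> \<le> B"
    unfolding bounded_real by blast
  have "f 0 * exp (- B * (t0 - 0)) \<le> f t0"
  proof (rule gronwall_lower[OF D])
    fix u assume u: "0 \<le> u" "u \<le> t0"
    have "0 \<le> f u"
      using t0 u by (cases "u = t0") force+
    moreover have "- B \<le> \<phi> u"
      using B u by force
    ultimately have "f u * (- B) \<le> f u * \<phi> u"
      by (intro mult_left_mono)
    then show "- B * f u \<le> f' u"
      using eq[of u] u by (simp add: mult.commute)
  qed (use t0 in auto)
  moreover have "0 < f 0 * exp (- B * (t0 - 0))"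
    using f0 by simp
  ultimately show False
    using t0 by simp
qed

lemma hitting_time_bounds:
  fixes s t :: real
  assumes "s \<le> t" "P t"
  shows "s \<le> Inf {u. s \<le> u \<and> P u}" "Inf {u. s \<le> u \<and> P u} \<le> t"
proof -
  have t: "t \<in> {u. s \<le> u \<and> P u}"
    using assms by simp
  then have "{u. s \<le> u \<and> P u} \<noteq> {}"
    by blast
  then show "s \<le> Inf {u. s \<le> u \<and> P u}"
    by (rule cInf_greatest) simp
  have "bdd_below {u. s \<le> u \<and> P u}"
    by (rule bdd_belowI[of _ s]) simp
  with t show "Inf {u. s \<le> u \<and> P u} \<le> t"
    by (rule cInf_lower)
qed

lemma hitting_time_attained:
  fixes f :: "real \<Rightarrow> real"
  assumes C: "continuous_on {s..} f" and "s \<le> t" "M \<le> f t"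
  shows "M \<le> f (Inf {u. s \<le> u \<and> M \<le> f u})"
proof -
  have "closed ({s..} \<inter> f -` {M..})"
    by (rule continuous_closed_preimage[OF C]) auto
  moreover have "{s..} \<inter> f -` {M..} = {u. s \<le> u \<and> M \<le> f u}"
    by auto
  ultimately have closed: "closed {u. s \<le> u \<and> M \<le> f u}"
    by simp
  have "t \<in> {u. s \<le> u \<and> M \<le> f u}"
    using assms by simp
  then have ne: "{u. s \<le> u \<and> M \<le> f u} \<noteq> {}"
    by blast
  have bdd: "bdd_below {u. s \<le> u \<and> M \<le> f u}"
    by (rule bdd_belowI[of _ s]) simp
  from closed_contains_Inf[OF ne bdd closed] show ?thesis
    by simp
qed

lemma one_sub_div_sqrt_bounds:
  fixes x s \<rho> :: real
  assumes \<rho>: "0 < \<rho>" "\<rho> \<le> x" and s: "0 \<le> s"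
  shows "0 \<le> 1 - x / sqrt (x\<^sup>2 + s)" "1 - x / sqrt (x\<^sup>2 + s) \<le> s / \<rho>\<^sup>2"
proof -
  define q where "q = sqrt (x\<^sup>2 + s)"
  have x: "0 < x"
    using \<rho> by simp
  have "sqrt (x\<^sup>2) \<le> q"
    unfolding q_def using s by (intro real_sqrt_le_mono) simp
  then have qx: "x \<le> q"
    using x by simp
  then show "0 \<le> 1 - x / sqrt (x\<^sup>2 + s)"
    using x unfolding q_def[symmetric] by simp
  have "q * q = x\<^sup>2 + s"
    unfolding q_def using s by simp
  have "(q - x) * x \<le> (q - x) * (q + x)"
    using qx x by (intro mult_left_mono) auto
  also have "\<dots> = s"
    using \<open>q * q = x\<^sup>2 + s\<close> by (simp add: algebra_simps power2_eq_square)
  finally have "(q - x) * x \<le> s" .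
  then have qx_le: "q - x \<le> s / x"
    using x by (simp add: le_divide_eq)
  have "1 - x / q = (q - x) / q"
    using qx x by (simp add: field_simps)
  also have "\<dots> \<le> (q - x) / x"
    using qx x by (intro divide_left_mono) auto
  also have "\<dots> \<le> (s / x) / x"
    using qx_le x by (intro divide_right_mono) auto
  also have "\<dots> = s / x\<^sup>2"
    by (simp add: power2_eq_square)
  also have "\<dots> \<le> s / \<rho>\<^sup>2"
    using \<rho> s by (intro divide_left_mono power_mono mult_pos_pos) auto
  finally show "1 - x / sqrt (x\<^sup>2 + s) \<le> s / \<rho>\<^sup>2"
    unfolding q_def .
qed

locale gradient_flow =
  fixes lam :: real and d :: nat and rho0 :: real and a b c :: "real \<Rightarrow> real"
  assumes d_ge_3: "3 \<le> d" and lam_pos: "0 < lam" and rho0: "0 < rho0" "rho0 < 1/3"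
    and sol: "is_sol lam d (rho0 / (real d + lam)) a b c"
begin

definition "mu = rho0 / (real d + lam)"
definition "r t = rr lam d (a t) (b t) (c t)"
definition "rb t = (1 + lam) * b t"
definition "rc t = (real d - 2) * c t"
definition "a' t = adot lam d (a t) (b t) (c t)"
definition "b' t = bdot lam d (a t) (b t) (c t)"
definition "c' t = cdot lam d (a t) (b t) (c t)"

lemma d_bounds: "1 \<le> real d - 2" "0 < real d + lam"
  using d_ge_3 lam_pos by auto

lemma initial: "a 0 = mu" "b 0 = mu" "c 0 = mu"
  using sol unfolding is_sol_def mu_def by auto

lemma has_deriv: "has_deriv_on_nonneg a a'" "has_deriv_on_nonneg b b'" "has_deriv_on_nonneg c c'"
  using sol unfolding is_sol_def has_deriv_on_nonneg_def a'_def b'_def c'_def by auto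

lemma r_eq: "r t = a t + rb t + rc t"
  unfolding r_def rb_def rc_def rr_def by simp

lemma a'_eq: "a' t = a t * (24 - 16 * a t - 8 * r t)"
  unfolding a'_def adot_def r_def by simp

lemma b'_eq: "b' t = b t * (8 * (1 + lam) * (1 - r t - 2 * rb t))"
  unfolding b'_def bdot_def r_def rb_def by (simp add: algebra_simps power2_eq_square)

lemma c'_eq: "c' t = c t * (8 * (1 - r t - 2 * c t))"
  unfolding c'_def cdot_def r_def by (simp add: algebra_simps power2_eq_square)

lemma mu_pos: "0 < mu"
  unfolding mu_def using rho0 d_bounds by simp

lemma mu_le: "mu \<le> rho0 / real d"
  unfolding mu_def using rho0 d_ge_3 lam_pos by (intro divide_left_mono) auto

lemma mu_le_rho0: "mu \<le> rho0"
proof -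
  have "rho0 / real d \<le> rho0 / 1"
    using rho0 d_ge_3 by (intro divide_left_mono) auto
  then show ?thesis
    using mu_le by simp
qed

lemma rc_0_le: "rc 0 \<le> rho0"
  unfolding rc_def initial mu_def using rho0 d_bounds lam_pos
  by (simp add: mult_le_cancel_left_pos divide_le_eq)

lemma continuous_r: "continuous_on {0..} r"
  using has_deriv[THEN has_deriv_on_nonneg_continuous_on]
  unfolding r_def rr_def by (intro continuous_intros) auto

lemma a_pos: "0 \<le> t \<Longrightarrow> 0 < a t"
  by (rule stays_positive[OF has_deriv(1) a'_eq])
    (use has_deriv_on_nonneg_continuous_on[OF has_deriv(1)] continuous_r initial mu_pos
      in \<open>auto intro!: continuous_intros\<close>)

lemma b_pos: "0 \<le> t \<Longrightarrow> 0 < b t"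
  by (rule stays_positive[OF has_deriv(2) b'_eq])
    (use has_deriv_on_nonneg_continuous_on[OF has_deriv(2)] continuous_r initial mu_pos
      in \<open>auto intro!: continuous_intros simp: rb_def\<close>)

lemma c_pos: "0 \<le> t \<Longrightarrow> 0 < c t"
  by (rule stays_positive[OF has_deriv(3) c'_eq])
    (use has_deriv_on_nonneg_continuous_on[OF has_deriv(3)] continuous_r initial mu_pos
      in \<open>auto intro!: continuous_intros\<close>)

lemma rb_pos: "0 \<le> t \<Longrightarrow> 0 < rb t"
  unfolding rb_def using b_pos lam_pos by simp

lemma rc_pos: "0 \<le> t \<Longrightarrow> 0 < rc t"
  unfolding rc_def using c_pos d_bounds by simp

lemma a_lt_1: "0 \<le> t \<Longrightarrow> a t < 1"
proof (rule stays_below[OF has_deriv(1)])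
  show "a 0 < 1"
    using initial mu_le_rho0 rho0 by simp
  fix t :: real assume t: "0 < t" "a t = 1"
  then have "1 < r t"
    using r_eq[of t] rb_pos[of t] rc_pos[of t] by simp
  then show "a' t < 0"
    using a'_eq[of t] t by simp
qed

lemma b_lt: "0 \<le> t \<Longrightarrow> b t < 1 / (3 * (1 + lam))"
proof (rule stays_below[OF has_deriv(2)])
  have "3 * rho0 * (1 + lam) < 1 * (1 + lam)"
    using rho0 lam_pos by (intro mult_strict_right_mono) auto
  also have "\<dots> \<le> real d + lam"
    using d_ge_3 by simp
  finally have "3 * rho0 * (1 + lam) < real d + lam" .
  moreover have "mu * (3 * (1 + lam)) = 3 * rho0 * (1 + lam) / (real d + lam)"
    unfolding mu_def by simp
  ultimately have "mu * (3 * (1 + lam)) < 1"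
    using d_bounds by simp
  then show "b 0 < 1 / (3 * (1 + lam))"
    using initial lam_pos by (simp add: less_divide_eq)
  fix t :: real assume t: "0 < t" "b t = 1 / (3 * (1 + lam))"
  then have rb: "rb t = 1/3"
    unfolding rb_def using lam_pos by simp
  then have "1 - r t - 2 * rb t < 0"
    using r_eq[of t] a_pos[of t] rc_pos[of t] t(1) by simp
  then show "b' t < 0"
    using b'_eq[of t] b_pos[of t] lam_pos t(1) by (simp add: mult_pos_neg)
qed

lemma c_lt: "0 \<le> t \<Longrightarrow> c t < 1 / (real d - 2)"
proof (rule stays_below[OF has_deriv(3)])
  have "rho0 * (real d - 2) < 1 * (real d - 2)"
    using rho0 d_bounds by (intro mult_strict_right_mono) auto
  also have "\<dots> \<le> real d + lam"
    using lam_pos by simp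
  finally have "rho0 * (real d - 2) < real d + lam" .
  then have "mu * (real d - 2) < 1"
    unfolding mu_def using d_bounds by (simp add: divide_less_eq)
  then show "c 0 < 1 / (real d - 2)"
    using initial d_bounds by (simp add: less_divide_eq)
  fix t :: real assume t: "0 < t" "c t = 1 / (real d - 2)"
  then have "rc t = 1"
    unfolding rc_def using d_bounds by simp
  then have "1 - r t - 2 * c t < 0"
    using r_eq[of t] a_pos[of t] rb_pos[of t] c_pos[of t] t(1) by simp
  then show "c' t < 0"
    using c'_eq[of t] c_pos[of t] t(1) by (simp add: mult_pos_neg)
qed

lemma rb_lt: "0 \<le> t \<Longrightarrow> rb t < 1/3"
  using b_lt lam_pos unfolding rb_def by (auto simp: field_simps)

lemma rc_lt: "0 \<le> t \<Longrightarrow> rc t < 1"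
  using c_lt d_bounds unfolding rc_def by (auto simp: field_simps)

lemma r_bounds:
  assumes "0 \<le> t"
  shows "0 < r t" "r t < 7/3"
  using r_eq[of t] a_pos[OF assms] a_lt_1[OF assms] rb_pos[OF assms] rb_lt[OF assms]
    rc_pos[OF assms] rc_lt[OF assms] by linarith+

lemma a'_ge_mult: "0 \<le> t \<Longrightarrow> k \<le> 24 - 16 * a t - 8 * r t \<Longrightarrow> k * a t \<le> a' t"
  using a_pos[of t] by (simp add: a'_eq mult.commute mult_left_mono)

lemma a'_le_mult: "0 \<le> t \<Longrightarrow> 24 - 16 * a t - 8 * r t \<le> k \<Longrightarrow> a' t \<le> k * a t"
  using a_pos[of t] by (simp add: a'_eq mult.commute mult_left_mono)

lemma c'_ge_mult: "0 \<le> t \<Longrightarrow> k \<le> 8 * (1 - r t - 2 * c t) \<Longrightarrow> k * c t \<le> c' t"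
  using c_pos[of t] by (simp add: c'_eq mult.commute mult_left_mono)

lemma c'_le_mult: "0 \<le> t \<Longrightarrow> 8 * (1 - r t - 2 * c t) \<le> k \<Longrightarrow> c' t \<le> k * c t"
  using c_pos[of t] by (simp add: c'_eq mult.commute mult_left_mono)

lemma a_exp_upper: "0 \<le> s \<Longrightarrow> s \<le> t \<Longrightarrow> a t \<le> a s * exp (24 * (t - s))"
proof (rule gronwall_upper[OF has_deriv(1)])
  fix u assume "0 \<le> s" "s \<le> u"
  then have "0 \<le> u" by simp
  then have "24 - 16 * a u - 8 * r u \<le> 24"
    using a_pos[OF \<open>0 \<le> u\<close>] r_bounds(1)[OF \<open>0 \<le> u\<close>] by linarith
  then show "a' u \<le> 24 * a u"
    by (rule a'_le_mult[OF \<open>0 \<le> u\<close>])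
qed

lemma a_exp_lower: "0 \<le> s \<Longrightarrow> s \<le> t \<Longrightarrow> a s * exp (-12 * (t - s)) \<le> a t"
proof (rule gronwall_lower[OF has_deriv(1)])
  fix u assume "0 \<le> s" "s \<le> u"
  then have u: "0 \<le> u" by simp
  have "-12 \<le> 24 - 16 * a u - 8 * r u"
    using a_lt_1[OF u] r_bounds[OF u] by linarith
  then show "-12 * a u \<le> a' u"
    by (rule a'_ge_mult[OF u])
qed

lemma c'_ge: "0 \<le> t \<Longrightarrow> -27 * c t \<le> c' t"
proof -
  assume t: "0 \<le> t"
  have "1 / (real d - 2) \<le> 1"
    using d_bounds by simp
  then have "c t < 1"
    using c_lt[OF t] by linarith
  then have "-27 \<le> 8 * (1 - r t - 2 * c t)"
    using r_bounds[OF t] unfolding ring_distribs by linarith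
  then show ?thesis
    by (rule c'_ge_mult[OF t])
qed

lemma rc_gronwall_lower:
  assumes "0 \<le> s" "s \<le> t" "\<And>u. s \<le> u \<Longrightarrow> u \<le> t \<Longrightarrow> k * c u \<le> c' u"
  shows "rc s * exp (k * (t - s)) \<le> rc t"
  using gronwall_lower[OF has_deriv(3) assms] d_bounds
  unfolding rc_def by (simp add: mult.assoc)

lemma rc_exp_upper:
  assumes "0 \<le> s" "s \<le> t"
  shows "rc t \<le> rc s * exp (8 * (t - s))"
proof -
  have "c t \<le> c s * exp (8 * (t - s))"
  proof (rule gronwall_upper[OF has_deriv(3) assms])
    fix u assume "s \<le> u"
    then have u: "0 \<le> u" using assms by simp
    have "8 * (1 - r u - 2 * c u) \<le> 8"
      using r_bounds[OF u] c_pos[OF u] unfolding ring_distribs by linarith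
    then show "c' u \<le> 8 * c u"
      by (rule c'_le_mult[OF u])
  qed
  then show ?thesis
    unfolding rc_def using d_bounds by (simp add: mult.assoc mult_left_mono)
qed

lemma b'_pos_iff: "0 \<le> t \<Longrightarrow> 0 < b' t \<longleftrightarrow> 0 < 1 - r t - 2 * rb t"
  using b'_eq[of t] b_pos[of t] lam_pos by (simp add: zero_less_mult_iff)

text \<open>Here exp (- \<Lambda>) bounds (d - 2) c from below at time 0, and (d - 2) c stays below 1.
  As c decays at rate at most 27 up to time s, it can afterwards grow at rate k for at most
  time (27 s + \<Lambda>) / k.\<close>
lemma c_growth_time_bound:
  assumes rc0: "exp (- \<Lambda>) \<le> rc 0" and s: "0 \<le> s" and k: "0 < k"
  shows "\<exists>u. s \<le> u \<and> u \<le> s + (27 * s + \<Lambda>) / k \<and> c' u < k * c u"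
proof (rule ccontr)
  define t where "t = s + (27 * s + \<Lambda>) / k"
  assume "\<not> ?thesis"
  then have rate: "\<And>u. s \<le> u \<Longrightarrow> u \<le> t \<Longrightarrow> k * c u \<le> c' u"
    by (auto simp: t_def not_less)
  have "exp (- \<Lambda>) < 1"
    using rc0 rc_lt[of 0] by linarith
  then have "0 < \<Lambda>" by simp
  then have st: "s \<le> t"
    using s k by (simp add: t_def)
  have decay: "rc 0 * exp (-27 * (s - 0)) \<le> rc s"
    by (rule rc_gronwall_lower) (use s c'_ge in auto)
  have "k * (t - s) = 27 * s + \<Lambda>"
    using k by (simp add: t_def)
  then have growth: "rc s * exp (27 * s + \<Lambda>) \<le> rc t"
    using rc_gronwall_lower[OF s st rate] by simp
  have "rc 0 * exp \<Lambda> = rc 0 * exp (-27 * (s - 0)) * exp (27 * s + \<Lambda>)"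
    by (simp add: mult.assoc flip: exp_add)
  also have "\<dots> \<le> rc s * exp (27 * s + \<Lambda>)"
    by (rule mult_right_mono[OF decay]) simp
  finally have "rc 0 * exp \<Lambda> \<le> rc t"
    using growth by linarith
  moreover have "1 \<le> rc 0 * exp \<Lambda>"
    using mult_right_mono[OF rc0, of "exp \<Lambda>"] by (simp flip: exp_add)
  ultimately show False
    using rc_lt[of t] s st by simp
qed

lemma b_fast_growth:
  assumes L: "0 \<le> L" and a_small: "mu * exp (24 * L) \<le> 1/16"
    and rc_small: "rho0 * exp (8 * L) \<le> 1/16"
    and rb_small: "\<And>u. 0 \<le> u \<Longrightarrow> u \<le> L \<Longrightarrow> rb u < 1/8"
  shows "mu * exp (4 * lam * L) \<le> b L"
proof -
  have "b 0 * exp (4 * lam * (L - 0)) \<le> b L"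
  proof (rule gronwall_lower[OF has_deriv(2) order_refl L])
    fix u assume u: "0 \<le> u" "u \<le> L"
    have "a u \<le> a 0 * exp (24 * (u - 0))"
      using u by (intro a_exp_upper) auto
    also have "\<dots> \<le> mu * exp (24 * L)"
      using u initial mu_pos by simp
    finally have au: "a u \<le> 1/16"
      using a_small by simp
    have "rc u \<le> rc 0 * exp (8 * (u - 0))"
      using u by (intro rc_exp_upper) auto
    also have "\<dots> \<le> rho0 * exp (8 * L)"
      using u rc_0_le rc_pos[of 0] by (intro mult_mono) auto
    finally have "rc u \<le> 1/16"
      using rc_small by simp
    then have "1/2 \<le> 1 - r u - 2 * rb u"
      using r_eq[of u] au rb_small[OF u] by linarith
    then have "8 * (1 + lam) * (1/2) \<le> 8 * (1 + lam) * (1 - r u - 2 * rb u)"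
      by (rule mult_left_mono) (use lam_pos in simp)
    then have "4 * lam \<le> 8 * (1 + lam) * (1 - r u - 2 * rb u)"
      by simp
    then show "4 * lam * b u \<le> b' u"
      using b_pos[OF u(1)] by (simp add: b'_eq mult.commute mult_left_mono)
  qed
  then show ?thesis
    using initial by simp
qed

lemma rb_ge_eighth:
  assumes L: "0 \<le> L" and a_small: "mu * exp (24 * L) \<le> 1/16"
    and rc_small: "rho0 * exp (8 * L) \<le> 1/16" and b_big: "1/8 \<le> mu * exp (4 * lam * L)"
    and u: "L \<le> u" and b'_pos: "\<And>v. 0 \<le> v \<Longrightarrow> v \<le> u \<Longrightarrow> 0 < b' v"
  shows "1/8 \<le> rb u"
proof -
  have rb_mono: "rb v \<le> rb w" if "0 \<le> v" "v \<le> w" "w \<le> u" for v w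
  proof -
    have "b v \<le> b w"
      by (rule deriv_nonneg_imp_le[OF has_deriv(2) that(1,2)])
        (use that b'_pos in \<open>auto intro: less_imp_le\<close>)
    then show ?thesis
      unfolding rb_def using lam_pos by (simp add: mult_left_mono)
  qed
  have "1/8 \<le> rb L"
  proof (rule ccontr)
    assume "\<not> 1/8 \<le> rb L"
    then have "\<And>v. 0 \<le> v \<Longrightarrow> v \<le> L \<Longrightarrow> rb v < 1/8"
      using rb_mono u by (meson le_less_trans not_le)
    then have "1/8 \<le> b L"
      using b_fast_growth[OF L a_small rc_small] b_big by fastforce
    also have "b L \<le> rb L"
      unfolding rb_def using b_pos[OF L] lam_pos by simp
    finally show False
      using \<open>\<not> 1/8 \<le> rb L\<close> by simp
  qed
  also have "rb L \<le> rb u"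
    by (rule rb_mono[OF L u order_refl])
  finally show ?thesis .
qed

lemma b_stops_growing:
  assumes L: "0 \<le> L" and a_small: "mu * exp (24 * L) \<le> 1/16"
    and rc_small: "rho0 * exp (8 * L) \<le> 1/16" and b_big: "1/8 \<le> mu * exp (4 * lam * L)"
    and d: "34 \<le> real d" and rc0: "exp (- \<Lambda>) \<le> rc 0"
  shows "\<exists>t. 0 \<le> t \<and> t \<le> 28 * L + \<Lambda> \<and> b' t \<le> 0"
proof (rule ccontr)
  assume "\<not> ?thesis"
  then have b'_pos: "\<And>v. 0 \<le> v \<Longrightarrow> v \<le> 28 * L + \<Lambda> \<Longrightarrow> 0 < b' v"
    by (meson not_le)
  obtain u where u: "L \<le> u" "u \<le> L + (27 * L + \<Lambda>) / 1" "c' u < 1 * c u"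
    using c_growth_time_bound[OF rc0 L, of 1] by auto
  then have u0: "0 \<le> u"
    using L by simp
  have "1/8 \<le> rb u"
    by (rule rb_ge_eighth[OF L a_small rc_small b_big u(1)]) (use u b'_pos in auto)
  moreover have "0 < 1 - r u - 2 * rb u"
    using b'_pos_iff[OF u0] b'_pos[OF u0] u by simp
  moreover have "1 / (real d - 2) \<le> 1/32"
    using d by (simp add: divide_le_eq)
  then have "c u \<le> 1/32"
    using c_lt[OF u0] by linarith
  ultimately have "1 \<le> 8 * (1 - r u - 2 * c u)"
    unfolding ring_distribs by linarith
  then have "1 * c u \<le> c' u"
    by (rule c'_ge_mult[OF u0])
  with u show False
    by simp
qed

lemma r_reaches:
  assumes eps: "0 < \<epsilon>" and d: "2 + 4 / \<epsilon> \<le> real d" and s: "0 \<le> s"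
    and rc0: "exp (- \<Lambda>) \<le> rc 0"
  shows "\<exists>t. s \<le> t \<and> t \<le> s + (27 * s + \<Lambda>) / (4 * \<epsilon>) \<and> 1 - \<epsilon> \<le> r t"
proof (rule ccontr)
  assume "\<not> ?thesis"
  then have r_low: "\<And>t. s \<le> t \<Longrightarrow> t \<le> s + (27 * s + \<Lambda>) / (4 * \<epsilon>) \<Longrightarrow> r t < 1 - \<epsilon>"
    by (meson not_le)
  obtain u where u: "s \<le> u" "u \<le> s + (27 * s + \<Lambda>) / (4 * \<epsilon>)" "c' u < 4 * \<epsilon> * c u"
    using c_growth_time_bound[OF rc0 s, of "4 * \<epsilon>"] eps by auto
  then have u0: "0 \<le> u"
    using s by simp
  have "4 / \<epsilon> \<le> real d - 2"
    using d by simp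
  then have "4 \<le> (real d - 2) * \<epsilon>"
    using eps by (simp add: divide_le_eq)
  then have "1 / (real d - 2) \<le> \<epsilon> / 4"
    using d_bounds by (simp add: divide_le_eq mult.commute)
  then have "c u \<le> \<epsilon> / 4"
    using c_lt[OF u0] by linarith
  then have "4 * \<epsilon> \<le> 8 * (1 - r u - 2 * c u)"
    using r_low[OF u(1,2)] unfolding ring_distribs by linarith
  then have "4 * \<epsilon> * c u \<le> c' u"
    by (rule c'_ge_mult[OF u0])
  with u show False
    by simp
qed

lemma T2a_bounds:
  assumes rho: "\<rho> \<le> 1/3" and eps: "0 < \<epsilon>" and L: "0 \<le> L"
    and a_small: "mu * exp (24 * L) \<le> 1/16" and rc_small: "rho0 * exp (8 * L) \<le> 1/16"
    and b_big: "1/8 \<le> mu * exp (4 * lam * L)"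
    and d: "34 \<le> real d" "2 + 4 / \<epsilon> \<le> real d" and rc0: "exp (- \<Lambda>) \<le> rc 0"
  shows "0 \<le> T2a lam d \<rho> \<epsilon> a b c"
    "T2a lam d \<rho> \<epsilon> a b c \<le> (28 * L + \<Lambda>) + (27 * (28 * L + \<Lambda>) + \<Lambda>) / (4 * \<epsilon>)"
proof -
  obtain t1 where t1: "0 \<le> t1" "t1 \<le> 28 * L + \<Lambda>" "b' t1 \<le> 0"
    using b_stops_growing[OF L a_small rc_small b_big d(1) rc0] by blast
  obtain t2 where t2: "t1 \<le> t2" "t2 \<le> t1 + (27 * t1 + \<Lambda>) / (4 * \<epsilon>)" "1 - \<epsilon> \<le> r t2"
    using r_reaches[OF eps d(2) t1(1) rc0] by blast
  have "1 - r t1 - 2 * rb t1 \<le> 0"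
    using b'_pos_iff[OF t1(1)] t1(3) by simp
  then have "\<rho> \<le> r t1"
    using rb_lt[OF t1(1)] rho by simp
  then have T1a: "0 \<le> T1a lam d \<rho> a b c" "T1a lam d \<rho> a b c \<le> t1"
    using hitting_time_bounds[of 0 t1 "\<lambda>t. \<rho> \<le> rr lam d (a t) (b t) (c t)"] t1(1)
    unfolding T1a_def r_def by auto
  then have T1: "T1a lam d \<rho> a b c \<le> T1 lam d \<rho> a b c" "T1 lam d \<rho> a b c \<le> t1"
    using hitting_time_bounds[of "T1a lam d \<rho> a b c" t1 "\<lambda>t. bdot lam d (a t) (b t) (c t) \<le> 0"] t1(3)
    unfolding T1_def b'_def by auto
  then have "T1 lam d \<rho> a b c \<le> T2a lam d \<rho> \<epsilon> a b c" "T2a lam d \<rho> \<epsilon> a b c \<le> t2"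
    using hitting_time_bounds[of "T1 lam d \<rho> a b c" t2 "\<lambda>t. 1 - \<epsilon> \<le> rr lam d (a t) (b t) (c t)"] t2
    unfolding T2a_def r_def by auto
  moreover have "(27 * t1 + \<Lambda>) / (4 * \<epsilon>) \<le> (27 * (28 * L + \<Lambda>) + \<Lambda>) / (4 * \<epsilon>)"
    using t1(2) eps by (simp add: divide_right_mono)
  ultimately show "0 \<le> T2a lam d \<rho> \<epsilon> a b c"
    "T2a lam d \<rho> \<epsilon> a b c \<le> (28 * L + \<Lambda>) + (27 * (28 * L + \<Lambda>) + \<Lambda>) / (4 * \<epsilon>)"
    using T1a T1 t1 t2 by linarith+
qed

lemma a_reaches:
  assumes s: "0 \<le> s" and rho: "\<rho> < 1/12" and as: "a s < \<rho>"
  shows "\<exists>t. s \<le> t \<and> t \<le> s + ln (\<rho> / a s) / 11 \<and> \<rho> \<le> a t"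
proof (rule ccontr)
  define \<tau> where "\<tau> = ln (\<rho> / a s) / 11"
  assume "\<not> ?thesis"
  then have below: "\<And>t. s \<le> t \<Longrightarrow> t \<le> s + \<tau> \<Longrightarrow> a t < \<rho>"
    unfolding \<tau>_def by (meson not_le)
  have as_pos: "0 < a s"
    by (rule a_pos[OF s])
  then have \<tau>: "0 < \<tau>"
    using as by (simp add: \<tau>_def)
  have "\<rho> = a s * exp (11 * (s + \<tau> - s))"
    using as_pos as by (simp add: \<tau>_def)
  also have "\<dots> \<le> a (s + \<tau>)"
  proof (rule gronwall_lower[OF has_deriv(1) s])
    fix u assume u: "s \<le> u" "u \<le> s + \<tau>"
    then have u0: "0 \<le> u"
      using s by simp
    have "a u < \<rho>"
      by (rule below[OF u])
    then have "11 \<le> 24 - 16 * a u - 8 * r u"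
      using r_eq[of u] rb_lt[OF u0] rc_lt[OF u0] rho by linarith
    then show "11 * a u \<le> a' u"
      by (rule a'_ge_mult[OF u0])
  qed (use \<tau> in simp)
  finally show False
    using below[of "s + \<tau>"] \<tau> by simp
qed

lemma escape_time_bounds:
  assumes s: "0 \<le> s" and rho: "\<rho> < 1/12" and as: "a s < \<rho>"
  defines "S \<equiv> Inf {t. s \<le> t \<and> \<rho> \<le> a t}"
  shows "\<rho> \<le> a S" "ln (\<rho> / a s) / 24 \<le> S - s" "S - s \<le> ln (\<rho> / a s) / 11"
proof -
  obtain t where t: "s \<le> t" "t \<le> s + ln (\<rho> / a s) / 11" "\<rho> \<le> a t"
    using a_reaches[OF s rho as] by blast
  have S: "s \<le> S" "S \<le> t"
    unfolding S_def using hitting_time_bounds[of s t "\<lambda>u. \<rho> \<le> a u"] t by auto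
  then show "S - s \<le> ln (\<rho> / a s) / 11"
    using t by simp
  have "continuous_on {s..} a"
    using has_deriv_on_nonneg_continuous_on[OF has_deriv(1)] by (rule continuous_on_subset) (use s in auto)
  then show aS: "\<rho> \<le> a S"
    unfolding S_def by (rule hitting_time_attained[where f = a and M = \<rho>, OF _ t(1,3)])
  have as_pos: "0 < a s"
    by (rule a_pos[OF s])
  have "\<rho> \<le> a s * exp (24 * (S - s))"
    using aS a_exp_upper[OF s S(1)] by simp
  then have "\<rho> / a s \<le> exp (24 * (S - s))"
    using as_pos by (simp add: divide_le_eq mult.commute)
  moreover have "0 < \<rho> / a s"
    using as_pos as by simp
  ultimately show "ln (\<rho> / a s) / 24 \<le> S - s"
    using ln_le_cancel_iff[of "\<rho> / a s" "exp (24 * (S - s))"] by simp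
qed

lemma one_sub_align_bounds:
  assumes t: "0 \<le> t" and rho: "0 < \<rho>" "\<rho> \<le> a t"
  shows "0 \<le> 1 - align d (a t) (b t) (c t)"
    "1 - align d (a t) (b t) (c t) \<le> (1 / (9 * (1 + lam)\<^sup>2) + 1 / (real d - 2)) / \<rho>\<^sup>2"
proof -
  define s where "s = (b t)\<^sup>2 + (real d - 2) * (c t)\<^sup>2"
  have align: "align d (a t) (b t) (c t) = a t / sqrt ((a t)\<^sup>2 + s)"
    unfolding align_def s_def by (simp add: add.assoc)
  have "(b t)\<^sup>2 \<le> (1 / (3 * (1 + lam)))\<^sup>2"
    using b_lt[OF t] b_pos[OF t] by (simp add: power_mono)
  moreover have "(1 / (3 * (1 + lam)))\<^sup>2 = 1 / (9 * (1 + lam)\<^sup>2)"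
    by (simp only: power_divide power_mult_distrib) simp
  ultimately have bs: "(b t)\<^sup>2 \<le> 1 / (9 * (1 + lam)\<^sup>2)"
    by simp
  have "(real d - 2) * (c t)\<^sup>2 = rc t * c t"
    unfolding rc_def by (simp add: power2_eq_square)
  also have "\<dots> \<le> 1 * c t"
    using rc_lt[OF t] c_pos[OF t] by (simp add: mult_right_mono)
  also have "\<dots> \<le> 1 / (real d - 2)"
    using c_lt[OF t] by simp
  finally have "s \<le> 1 / (9 * (1 + lam)\<^sup>2) + 1 / (real d - 2)"
    unfolding s_def using bs by simp
  then have "s / \<rho>\<^sup>2 \<le> (1 / (9 * (1 + lam)\<^sup>2) + 1 / (real d - 2)) / \<rho>\<^sup>2"
    by (rule divide_right_mono) simp
  moreover have s0: "0 \<le> s"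
    unfolding s_def using d_bounds by simp
  ultimately show "0 \<le> 1 - align d (a t) (b t) (c t)"
    "1 - align d (a t) (b t) (c t) \<le> (1 / (9 * (1 + lam)\<^sup>2) + 1 / (real d - 2)) / \<rho>\<^sup>2"
    using one_sub_div_sqrt_bounds[OF rho s0] unfolding align by linarith+
qed

lemma mu_ge:
  assumes "0 \<le> Ku" "lam \<le> Ku * real d"
  shows "rho0 / ((1 + Ku) * real d) \<le> mu"
  unfolding mu_def
proof (rule divide_left_mono)
  show "real d + lam \<le> (1 + Ku) * real d"
    using assms by (simp add: algebra_simps)
  show "0 < (1 + Ku) * real d * (real d + lam)"
    using assms d_bounds d_ge_3 by simp
qed (use rho0 in simp)

lemma b_big_of_regime:
  assumes kap: "0 < kap" "kap * ln (real d) \<le> lam" and Ku: "0 \<le> Ku" "lam \<le> Ku * real d"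
    and big: "(1 + Ku) / 8 \<le> rho0 * real d ^ 3"
  shows "1/8 \<le> mu * exp (4 * lam * (1 / kap))"
proof -
  have d: "0 < real d"
    using d_ge_3 by simp
  have "ln (real d) \<le> lam / kap"
    using kap by (simp add: pos_le_divide_eq mult.commute)
  then have "exp (4 * ln (real d)) \<le> exp (4 * lam * (1 / kap))"
    by simp
  moreover have "real d powr 4 = exp (4 * ln (real d))"
    using d by (simp add: powr_def)
  moreover have "real d powr 4 = real d ^ 4"
    using d by (simp add: powr_numeral)
  ultimately have d4: "real d ^ 4 \<le> exp (4 * lam * (1 / kap))"
    by simp
  have "1/8 \<le> rho0 * real d ^ 3 / (1 + Ku)"
    using big Ku by (simp add: le_divide_eq)
  also have "\<dots> = rho0 * real d ^ 3 * real d / ((1 + Ku) * real d)"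
    using d by simp
  also have "\<dots> = rho0 / ((1 + Ku) * real d) * real d ^ 4"
    by (simp add: eval_nat_numeral)
  also have "\<dots> \<le> mu * exp (4 * lam * (1 / kap))"
    by (rule mult_mono[OF mu_ge[OF Ku] d4]) (use mu_pos in auto)
  finally show ?thesis .
qed

lemma rc_0_ge:
  assumes Ku: "0 \<le> Ku" "lam \<le> Ku * real d"
  shows "exp (- ln (3 * (1 + Ku) / rho0)) \<le> rc 0"
proof -
  have d: "0 < real d"
    using d_ge_3 by simp
  have y: "0 < 3 * (1 + Ku) / rho0"
    using rho0 Ku by simp
  have third: "1/3 \<le> (real d - 2) / real d"
    using d_ge_3 d by (simp add: le_divide_eq)
  have "exp (- ln (3 * (1 + Ku) / rho0)) = rho0 / (1 + Ku) * (1/3)"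
    by (simp only: exp_minus exp_ln[OF y]) (simp add: inverse_divide)
  also have "\<dots> \<le> rho0 / (1 + Ku) * ((real d - 2) / real d)"
    using third by (rule mult_left_mono) (use rho0 Ku in simp)
  also have "\<dots> = (real d - 2) * (rho0 / ((1 + Ku) * real d))"
    by (simp add: field_simps)
  also have "\<dots> \<le> (real d - 2) * mu"
    by (rule mult_left_mono[OF mu_ge[OF Ku]]) (use d_bounds in simp)
  also have "\<dots> = rc 0"
    by (simp add: rc_def initial)
  finally show ?thesis .
qed

lemma ln_inv_a_bounds:
  assumes s: "0 \<le> s" "s \<le> Tm" and Ku: "0 \<le> Ku" "lam \<le> Ku * real d"
  shows "ln (real d) - 24 * Tm \<le> ln (1 / a s)"
    "ln (1 / a s) \<le> ln ((1 + Ku) * real d / rho0) + 12 * Tm"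
proof -
  have as: "0 < a s"
    by (rule a_pos[OF s(1)])
  have d: "0 < real d"
    using d_ge_3 by simp
  have inv: "ln (1 / a s) = - ln (a s)"
    using as by (simp add: ln_div)
  have "a s \<le> mu * exp (24 * (s - 0))"
    using a_exp_upper[OF order_refl s(1)] initial by simp
  also have "\<dots> \<le> rho0 / real d * exp (24 * Tm)"
    by (rule mult_mono[OF mu_le]) (use s rho0 d in auto)
  also have "\<dots> \<le> exp (24 * Tm) / real d"
    using rho0 d by (simp add: divide_right_mono)
  finally have "ln (a s) \<le> ln (exp (24 * Tm) / real d)"
    using as d by simp
  also have "\<dots> = 24 * Tm - ln (real d)"
    using d by (simp add: ln_div)
  finally show "ln (real d) - 24 * Tm \<le> ln (1 / a s)"
    unfolding inv by simp
  have pos: "0 < rho0 / ((1 + Ku) * real d) * exp (-12 * Tm)"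
    using rho0 Ku d by simp
  have "rho0 / ((1 + Ku) * real d) * exp (-12 * Tm) \<le> mu * exp (-12 * (s - 0))"
    by (rule mult_mono[OF mu_ge[OF Ku]]) (use s mu_pos in auto)
  also have "\<dots> \<le> a s"
    using a_exp_lower[OF order_refl s(1)] initial by simp
  finally have "ln (rho0 / ((1 + Ku) * real d) * exp (-12 * Tm)) \<le> ln (a s)"
    using as pos by simp
  moreover have "ln (rho0 / ((1 + Ku) * real d) * exp (-12 * Tm))
      = - ln ((1 + Ku) * real d / rho0) - 12 * Tm"
    using rho0 Ku d by (simp add: ln_mult ln_div)
  ultimately show "ln (1 / a s) \<le> ln ((1 + Ku) * real d / rho0) + 12 * Tm"
    unfolding inv by linarith
qed

text \<open>Tm is the bound on T2a of T2a_bounds for L = 1 / kap, with the \<Lambda> of rc_0_ge.\<close>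
lemma T2_estimates:
  fixes kap Ku \<rho> \<epsilon> :: real
  defines "\<Lambda> \<equiv> ln (3 * (1 + Ku) / rho0)"
  defines "Tm \<equiv> (28 / kap + \<Lambda>) + (27 * (28 / kap + \<Lambda>) + \<Lambda>) / (4 * \<epsilon>)"
  defines "S2a \<equiv> T2a lam d \<rho> \<epsilon> a b c" and "S2 \<equiv> T2 lam d \<rho> \<epsilon> a b c"
  assumes rho: "0 < \<rho>" "\<rho> < 1/12" and eps: "0 < \<epsilon>"
    and kap: "0 < kap" "kap * ln (real d) \<le> lam" and Ku: "0 \<le> Ku" "lam \<le> Ku * real d"
    and a_small: "rho0 * exp (24 / kap) \<le> 1/16" and rc_small: "rho0 * exp (8 / kap) \<le> 1/16"
    and b_big: "(1 + Ku) / 8 \<le> rho0 * real d ^ 3"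
    and d: "34 \<le> real d" "2 + 4 / \<epsilon> \<le> real d"
    and Tm_small: "ln (real d) / 2 \<le> ln (real d) - 24 * Tm"
      "ln ((1 + Ku) * real d / rho0) + 12 * Tm \<le> 2 * ln (real d)"
    and rho_large: "4 * ln (1 / \<rho>) \<le> ln (real d)"
  shows "ln (1 / a S2a) / 48 \<le> S2 - S2a" "S2 - S2a \<le> ln (1 / a S2a) / 11"
    "ln (real d) / 2 \<le> ln (1 / a S2a)" "ln (1 / a S2a) \<le> 2 * ln (real d)"
    "0 \<le> 1 - align d (a S2) (b S2) (c S2)"
    "1 - align d (a S2) (b S2) (c S2) \<le> (1 / (9 * (1 + lam)\<^sup>2) + 1 / (real d - 2)) / \<rho>\<^sup>2"
proof -
  have "mu * exp (24 / kap) \<le> rho0 * exp (24 / kap)"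
    by (rule mult_right_mono[OF mu_le_rho0]) simp
  then have "mu * exp (24 / kap) \<le> 1/16"
    using a_small by linarith
  moreover have "rho0 * exp (8 * (1 / kap)) \<le> 1/16"
    using rc_small by simp
  ultimately have S2a: "0 \<le> S2a" "S2a \<le> Tm"
    using T2a_bounds[of \<rho> \<epsilon> "1 / kap" \<Lambda>] b_big_of_regime[OF kap Ku b_big] rc_0_ge[OF Ku]
      rho eps kap d unfolding S2a_def Tm_def \<Lambda>_def by auto
  define l where "l = ln (1 / a S2a)"
  show l: "ln (real d) / 2 \<le> l" "l \<le> 2 * ln (real d)"
    using ln_inv_a_bounds[OF S2a Ku] Tm_small unfolding l_def by linarith+
  have ln_rho: "0 < ln (1 / \<rho>)"
    using rho by simp
  then have "ln (1 / \<rho>) < l"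
    using l rho_large by linarith
  then have "1 / \<rho> < 1 / a S2a"
    using a_pos[OF S2a(1)] rho unfolding l_def by simp
  then have aS2a: "a S2a < \<rho>"
    using a_pos[OF S2a(1)] rho by (simp add: field_simps)
  have esc: "\<rho> \<le> a S2" "ln (\<rho> / a S2a) / 24 \<le> S2 - S2a" "S2 - S2a \<le> ln (\<rho> / a S2a) / 11"
    using escape_time_bounds[OF S2a(1) rho(2) aS2a]
    unfolding S2_def T2_def S2a_def[symmetric] by auto
  have "ln (\<rho> / a S2a) = l - ln (1 / \<rho>)"
    using rho a_pos[OF S2a(1)] unfolding l_def by (simp add: ln_div)
  then show D: "l / 48 \<le> S2 - S2a" "S2 - S2a \<le> l / 11"
    using esc l rho_large ln_rho by linarith+
  have "0 \<le> ln (real d)"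
    using d by simp
  then have "0 \<le> S2"
    using S2a(1) D(1) l(1) by linarith
  then show "0 \<le> 1 - align d (a S2) (b S2) (c S2)"
    "1 - align d (a S2) (b S2) (c S2) \<le> (1 / (9 * (1 + lam)\<^sup>2) + 1 / (real d - 2)) / \<rho>\<^sup>2"
    using one_sub_align_bounds[OF _ rho(1) esc(1)] by blast+
qed

end


lemma eventually_large_d:
  fixes c0 kap Ku \<rho> \<epsilon> :: real
  assumes "0 < c0" "0 < kap" "0 < Ku" "0 < \<epsilon>"
  defines "\<Lambda> \<equiv> \<lambda>x. ln (3 * (1 + Ku) / ln x powr (- c0))"
  defines "Tm \<equiv> \<lambda>x. (28 / kap + \<Lambda> x) + (27 * (28 / kap + \<Lambda> x) + \<Lambda> x) / (4 * \<epsilon>)"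
  shows "\<forall>\<^sub>F x in at_top. ln x powr (- c0) < 1/3
    \<and> ln x powr (- c0) * exp (24 / kap) \<le> 1/16 \<and> ln x powr (- c0) * exp (8 / kap) \<le> 1/16
    \<and> (1 + Ku) / 8 \<le> ln x powr (- c0) * x ^ 3 \<and> 34 \<le> x \<and> 2 + 4 / \<epsilon> \<le> x
    \<and> ln x / 2 \<le> ln x - 24 * Tm x
    \<and> ln ((1 + Ku) * x / ln x powr (- c0)) + 12 * Tm x \<le> 2 * ln x
    \<and> 4 * ln (1 / \<rho>) \<le> ln x"
  unfolding Tm_def \<Lambda>_def using assms(1-4) by (intro eventually_conj; real_asymp)

lemma eventually_T2_estimates:
  fixes c0 \<rho> \<epsilon> :: real and lam :: "nat \<Rightarrow> real" and a b c :: "nat \<Rightarrow> real \<Rightarrow> real"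
  defines "S2a \<equiv> \<lambda>d. T2a (lam d) d \<rho> \<epsilon> (a d) (b d) (c d)"
    and "S2 \<equiv> \<lambda>d. T2 (lam d) d \<rho> \<epsilon> (a d) (b d) (c d)"
  assumes c0: "0 < c0" and rho: "0 < \<rho>" "\<rho> < 1/12" and eps: "0 < \<epsilon>"
    and lam_pos: "\<forall>d\<ge>3. 0 < lam d" and lam_lower: "lam \<in> \<Omega>(\<lambda>d. ln (real d))"
    and lam_upper: "lam \<in> O(\<lambda>d. real d)"
    and sol: "\<forall>d\<ge>3. is_sol (lam d) d (ln (real d) powr (- c0) / (real d + lam d)) (a d) (b d) (c d)"
  shows "\<forall>\<^sub>F d in at_top.
      ln (1 / a d (S2a d)) / 48 \<le> S2 d - S2a d \<and> S2 d - S2a d \<le> ln (1 / a d (S2a d)) / 11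
    \<and> ln (real d) / 2 \<le> ln (1 / a d (S2a d)) \<and> ln (1 / a d (S2a d)) \<le> 2 * ln (real d)
    \<and> 0 \<le> 1 - align d (a d (S2 d)) (b d (S2 d)) (c d (S2 d))
    \<and> 1 - align d (a d (S2 d)) (b d (S2 d)) (c d (S2 d))
        \<le> (1 / (9 * (1 + lam d)\<^sup>2) + 1 / (real d - 2)) / \<rho>\<^sup>2"
proof -
  obtain kap where kap: "0 < kap"
    and ev_kap: "\<forall>\<^sub>F d in at_top. kap * norm (ln (real d)) \<le> norm (lam d)"
    using lam_lower unfolding bigomega_def by blast
  obtain Ku where Ku: "0 < Ku" and ev_Ku: "\<forall>\<^sub>F d in at_top. norm (lam d) \<le> Ku * norm (real d)"
    using lam_upper unfolding bigo_def by blast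
  note ev_large = eventually_compose_filterlim[OF
      eventually_large_d[OF c0 kap Ku eps, of \<rho>] filterlim_real_sequentially]
  show ?thesis
    using eventually_ge_at_top[of 3] ev_kap ev_Ku ev_large
  proof eventually_elim
    case (elim d)
    have lnd: "0 < ln (real d)"
      using elim(1) by simp
    then have lam: "0 < lam d" "kap * ln (real d) \<le> lam d" "lam d \<le> Ku * real d"
      using elim(1-3) lam_pos by auto
    interpret gradient_flow "lam d" d "ln (real d) powr (- c0)" "a d" "b d" "c d"
      by unfold_locales (use elim(1) lam(1) lnd conjunct1[OF elim(4)] sol in simp_all)
    note est = T2_estimates[where kap = kap and Ku = Ku and \<rho> = \<rho> and \<epsilon> = \<epsilon>,
        OF rho eps kap lam(2) less_imp_le[OF Ku] lam(3)]
    show ?case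
      using elim(4) unfolding S2a_def S2_def
      by (elim conjE) (intro conjI; rule est; assumption)
  qed
qed

lemma split_nonneg_bigo:
  fixes e u v :: "'a \<Rightarrow> real"
  assumes "\<forall>\<^sub>F x in F. 0 \<le> e x \<and> e x \<le> u x + v x" and "\<forall>\<^sub>F x in F. 0 \<le> u x"
  shows "\<exists>f g. f \<in> O[F](u) \<and> g \<in> O[F](v) \<and> (\<forall>x. e x = f x + g x)"
proof -
  define f where "f x = min (e x) (u x)" for x
  define g where "g x = e x - f x" for x
  have "\<forall>\<^sub>F x in F. norm (f x) \<le> 1 * norm (u x)"
    using assms by eventually_elim (auto simp: f_def min_def)
  then have "f \<in> O[F](u)"
    by (rule bigoI)
  moreover have "\<forall>\<^sub>F x in F. norm (g x) \<le> 1 * norm (v x)"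
    using assms by eventually_elim (auto simp: g_def f_def min_def)
  then have "g \<in> O[F](v)"
    by (rule bigoI)
  ultimately show ?thesis
    by (intro exI[of _ f] exI[of _ g]) (simp add: g_def)
qed

lemma bigo_const_div_succ_square:
  fixes g :: "'a \<Rightarrow> real"
  assumes "\<forall>\<^sub>F x in F. 0 < g x"
  shows "(\<lambda>x. k / (1 + g x)\<^sup>2) \<in> O[F](\<lambda>x. 1 / (g x)\<^sup>2)"
proof (rule bigoI)
  show "\<forall>\<^sub>F x in F. norm (k / (1 + g x)\<^sup>2) \<le> \<bar>k\<bar> * norm (1 / (g x)\<^sup>2)"
    using assms
  proof eventually_elim
    case (elim x)
    have "(g x)\<^sup>2 \<le> (1 + g x)\<^sup>2"
      by (rule power_mono) (use elim in auto)
    then have "1 / (1 + g x)\<^sup>2 \<le> 1 / (g x)\<^sup>2"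
      by (rule divide_left_mono) (use elim in auto)
    then have "\<bar>k\<bar> * (1 / (1 + g x)\<^sup>2) \<le> \<bar>k\<bar> * (1 / (g x)\<^sup>2)"
      by (rule mult_left_mono) simp
    then show ?case
      by simp
  qed
qed

lemma misalignment_split:
  fixes e lam :: "nat \<Rightarrow> real" and \<rho> :: real
  assumes rho: "0 < \<rho>" and lam: "\<forall>\<^sub>F d in at_top. 0 < lam d"
    and e: "\<forall>\<^sub>F d in at_top. 0 \<le> e d \<and> e d \<le> (1 / (9 * (1 + lam d)\<^sup>2) + 1 / (real d - 2)) / \<rho>\<^sup>2"
  shows "\<exists>f g. f \<in> O(\<lambda>d. 1 / (lam d)\<^sup>2) \<and> g \<in> o(\<lambda>d. 1) \<and> (\<forall>d. e d = f d + g d)"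
proof -
  let ?u = "\<lambda>d. 1 / (9 * (1 + lam d)\<^sup>2) / \<rho>\<^sup>2" and ?v = "\<lambda>d. 1 / (real d - 2) / \<rho>\<^sup>2"
  have "\<forall>\<^sub>F d in at_top. 0 \<le> e d \<and> e d \<le> ?u d + ?v d"
    using e by (auto elim!: eventually_mono simp: add_divide_distrib)
  moreover have "\<forall>\<^sub>F d in at_top. 0 \<le> ?u d"
    by simp
  ultimately have "\<exists>f g. f \<in> O(?u) \<and> g \<in> O(?v) \<and> (\<forall>d. e d = f d + g d)"
    by (rule split_nonneg_bigo)
  then obtain f g where f: "f \<in> O(?u)" and g: "g \<in> O(?v)" and fg: "\<forall>d. e d = f d + g d"
    by blast
  have u_eq: "?u = (\<lambda>d. 1 / (9 * \<rho>\<^sup>2) / (1 + lam d)\<^sup>2)"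
    by (simp add: fun_eq_iff mult_ac)
  have u: "?u \<in> O(\<lambda>d. 1 / (lam d)\<^sup>2)"
    unfolding u_eq by (rule bigo_const_div_succ_square[OF lam])
  have v: "?v \<in> o(\<lambda>d. 1)"
    using rho by real_asymp
  show ?thesis
    using landau_o.big_trans[OF f u] landau_o.big_small_trans[OF g v] fg by blast
qed

theorem propositionB6:
  fixes c0 \<rho> \<epsilon> :: real
    and lam :: "nat \<Rightarrow> real"
    and a b c :: "nat \<Rightarrow> real \<Rightarrow> real"
  assumes c0_pos: "c0 > 0"
    and rho: "0 < \<rho>" "\<rho> < 1/12"
    and eps: "0 < \<epsilon>" "\<epsilon> \<le> 1/4"
    and lam_pos: "\<forall>d\<ge>3. lam d > 0"
    and lam_lower: "lam \<in> \<Omega>(\<lambda>d. ln (real d))"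
    and lam_upper: "lam \<in> O(\<lambda>d. real d)"
    and sol: "\<forall>d\<ge>3. is_sol (lam d) d (ln (real d) powr (- c0) / (real d + lam d)) (a d) (b d) (c d)"
  shows "(\<lambda>d. T2 (lam d) d \<rho> \<epsilon> (a d) (b d) (c d) - T2a (lam d) d \<rho> \<epsilon> (a d) (b d) (c d))
            \<in> \<Theta>(\<lambda>d. ln (1 / a d (T2a (lam d) d \<rho> \<epsilon> (a d) (b d) (c d))))
      \<and> (\<lambda>d. T2 (lam d) d \<rho> \<epsilon> (a d) (b d) (c d) - T2a (lam d) d \<rho> \<epsilon> (a d) (b d) (c d))
            \<in> \<Theta>(\<lambda>d. ln (real d))
      \<and> (\<exists>f g :: nat \<Rightarrow> real. f \<in> O(\<lambda>d. 1 / (lam d)^2) \<and> g \<in> o(\<lambda>d. 1) \<and>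
           (\<forall>\<^sub>F d in at_top. align d (a d (T2 (lam d) d \<rho> \<epsilon> (a d) (b d) (c d)))
                                     (b d (T2 (lam d) d \<rho> \<epsilon> (a d) (b d) (c d)))
                                     (c d (T2 (lam d) d \<rho> \<epsilon> (a d) (b d) (c d)))
                               = 1 - f d - g d))"
proof -
  let ?T2a = "\<lambda>d. T2a (lam d) d \<rho> \<epsilon> (a d) (b d) (c d)"
  let ?T2 = "\<lambda>d. T2 (lam d) d \<rho> \<epsilon> (a d) (b d) (c d)"
  note est = eventually_T2_estimates[OF c0_pos rho eps(1) lam_pos lam_lower lam_upper sol]
  have theta_a: "(\<lambda>d. ?T2 d - ?T2a d) \<in> \<Theta>(\<lambda>d. ln (1 / a d (?T2a d)))"
    by (rule bigthetaI'[of "1/48" "1/11"]) (use est in \<open>auto elim!: eventually_mono\<close>)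
  have theta_d: "(\<lambda>d. ?T2 d - ?T2a d) \<in> \<Theta>(\<lambda>d. ln (real d))"
    by (rule bigthetaI'[of "1/96" "2/11"]) (use est in \<open>auto elim!: eventually_mono\<close>)
  have lam_ev: "\<forall>\<^sub>F d in at_top. 0 < lam d"
    using eventually_ge_at_top[of 3] by eventually_elim (use lam_pos in auto)
  have "\<forall>\<^sub>F d in at_top. 0 \<le> 1 - align d (a d (?T2 d)) (b d (?T2 d)) (c d (?T2 d))
      \<and> 1 - align d (a d (?T2 d)) (b d (?T2 d)) (c d (?T2 d))
        \<le> (1 / (9 * (1 + lam d)\<^sup>2) + 1 / (real d - 2)) / \<rho>\<^sup>2"
    using est by (rule eventually_mono) simp
  from misalignment_split[OF rho(1) lam_ev this]
  obtain f g where f: "f \<in> O(\<lambda>d. 1 / (lam d)\<^sup>2)" and g: "g \<in> o(\<lambda>d. 1)"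
    and fg: "\<And>d. 1 - align d (a d (?T2 d)) (b d (?T2 d)) (c d (?T2 d)) = f d + g d"
    by blast
  have "align d (a d (?T2 d)) (b d (?T2 d)) (c d (?T2 d)) = 1 - f d - g d" for d
    using fg[of d] by linarith
  then show ?thesis
    by (intro conjI exI[of _ f] exI[of _ g]) (use theta_a theta_d f g in auto)
qed

end
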